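(* Let $p,\Delta>0$ be fixed integers and suppose that sequences $\{\xi_{s,t}\}_{s,t\ge0}\subseteq\mathbb{N}$ and $\{k_i\}_{i\ge0}\subseteq\mathbb{N}$ satisfy $$k_{s+t}=k_s+k_t+p-\Delta\xi_{s,t}\quad\text{for all } s,t\ge0.$$ Then $\Delta\xi_{s,0}=\Delta\xi_{0,s}=k_0+p$ for all $s\ge0$, and $$k_n=nk_1+(n-1)p-\Delta\sum_{s=1}^{n-1}\xi_{1,s}\quad(n>0),\qquad \xi_{u,v}=-\sum_{s=1}^{\min\{u,v\}-1}\xi_{1,s}+\sum_{s=\max\{u,v\}}^{u+v-1}\xi_{1,s}\quad(u,v>0).$$
   Context: $\mathbb{N}$ includes $0$. A sum $\sum_{i=a}^b$ with $b<a$ is zero. *)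

theory Defs
  imports Main
begin

end

theory Submission
  imports Defs
begin

text \<open>Putting \<open>t = 0\<close> in the recursion gives the first claim, putting \<open>s = 1\<close> gives a
  first-order recursion for \<open>k\<close> whose solution is the second claim, and solving the recursion for
  \<open>\<Delta> \<xi>\<^sub>u\<^sub>,\<^sub>v = k\<^sub>u + k\<^sub>v + p - k\<^sub>u\<^sub>+\<^sub>v\<close> and inserting the closed form leaves
  \<open>\<Delta>\<close> times a difference of partial sums of \<open>\<xi>\<^sub>1\<^sub>,\<^sub>s\<close>, which telescopes to the third claim.\<close>

lemma sum_diff_partial_sums_min_max:
  fixes f :: "nat \<Rightarrow> 'a::ab_group_add"
  assumes "u > 0" "v > 0"
  shows "(\<Sum>s=1..u+v-1. f s) - (\<Sum>s=1..u-1. f s) - (\<Sum>s=1..v-1. f s)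
           = - (\<Sum>s=1..min u v - 1. f s) + (\<Sum>s=max u v..u+v-1. f s)"
proof -
  have split: "(\<Sum>s=1..a+b-1. f s) = (\<Sum>s=1..b-1. f s) + (\<Sum>s=b..a+b-1. f s)"
    if "b > 0" for a b
    using sum.ub_add_nat[of 1 "b-1" f a] that by (simp add: add.commute)
  show ?thesis
  proof (cases "u \<le> v")
    case True
    then show ?thesis using split[of v u] assms by (simp add: max_def min_def)
  next
    case False
    then show ?thesis using split[of u v] assms by (simp add: max_def min_def add.commute)
  qed
qed

locale additive_defect =
  fixes K :: "nat \<Rightarrow> 'a::comm_ring_1" and X :: "nat \<Rightarrow> nat \<Rightarrow> 'a" and c d :: 'a
  assumes rec: "\<And>s t. K (s + t) = K s + K t + c - d * X s t"
begin

lemma defect_zero_left: "d * X 0 s = K 0 + c"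
  using rec[of 0 s] by (simp add: algebra_simps)

lemma defect_zero_right: "d * X s 0 = K 0 + c"
  using rec[of s 0] by (simp add: algebra_simps)

lemma closed_form:
  assumes "n > 0"
  shows "K n = of_nat n * K 1 + (of_nat n - 1) * c - d * (\<Sum>s=1..n-1. X 1 s)"
  using assms
proof (induction n rule: nat_induct_non_zero)
  case 1
  then show ?case by simp
next
  case (Suc m)
  have "K (Suc m) = K 1 + K m + c - d * X 1 m"
    using rec[of 1 m] by simp
  moreover have "(\<Sum>s=1..Suc m - 1. X 1 s) = (\<Sum>s=1..m-1. X 1 s) + X 1 m"
    using \<open>m > 0\<close> by (cases m) simp_all
  ultimately show ?case
    using Suc.IH by (simp add: algebra_simps)
qed

lemma defect_eq_partial_sums:
  assumes "u > 0" "v > 0"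
  shows "d * X u v = d * (- (\<Sum>s=1..min u v - 1. X 1 s) + (\<Sum>s=max u v..u+v-1. X 1 s))"
proof -
  let ?S = "\<lambda>n. \<Sum>s=1..n. X 1 s"
  have "d * X u v = K u + K v + c - K (u + v)"
    using rec[of u v] by (simp add: algebra_simps)
  also have "\<dots> = d * (?S (u+v-1) - ?S (u-1) - ?S (v-1))"
    unfolding closed_form[OF \<open>u > 0\<close>] closed_form[OF \<open>v > 0\<close>]
      closed_form[OF add_pos_pos[OF assms]]
    by (simp add: algebra_simps)
  also have "?S (u+v-1) - ?S (u-1) - ?S (v-1)
               = - ?S (min u v - 1) + (\<Sum>s=max u v..u+v-1. X 1 s)"
    using assms by (rule sum_diff_partial_sums_min_max)
  finally show ?thesis .
qed

end

theorem lemma2p6: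
  fixes p \<Delta> :: int and \<xi> :: "nat \<Rightarrow> nat \<Rightarrow> nat" and k :: "nat \<Rightarrow> nat"
  assumes "p > 0" and "\<Delta> > 0"
    and rec: "\<And>s t. int (k (s + t)) = int (k s) + int (k t) + p - \<Delta> * int (\<xi> s t)"
  shows "(\<forall>s. \<Delta> * int (\<xi> s 0) = int (k 0) + p \<and> \<Delta> * int (\<xi> 0 s) = int (k 0) + p)
    \<and> (\<forall>n>0. int (k n) = int n * int (k 1) + (int n - 1) * p - \<Delta> * (\<Sum>s=1..n-1. int (\<xi> 1 s)))
    \<and> (\<forall>u>0. \<forall>v>0. int (\<xi> u v) = - (\<Sum>s=1..min u v - 1. int (\<xi> 1 s))
                                   + (\<Sum>s=max u v..u+v-1. int (\<xi> 1 s)))"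
proof -
  interpret additive_defect "\<lambda>n. int (k n)" "\<lambda>s t. int (\<xi> s t)" p \<Delta>
    using rec by unfold_locales
  have "int (\<xi> u v) = - (\<Sum>s=1..min u v - 1. int (\<xi> 1 s)) + (\<Sum>s=max u v..u+v-1. int (\<xi> 1 s))"
    if "u > 0" "v > 0" for u v
    using defect_eq_partial_sums[OF that] \<open>\<Delta> > 0\<close> by simp
  with defect_zero_left defect_zero_right closed_form show ?thesis
    by blast
qed

end
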